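(* If a variety $\Theta$ is logically perfect, then it is logically regular.
   Context: Setting: variety $\Theta$, infinite variable set $X^0$, $\Gamma^0$ its finite subsets, $W(X)$ the free $\Theta$-algebra on $X$, points $\mu:W(X)\to H$. $\Phi(X)$ is the $X$-sort of the multi-sorted algebra of first-order formulas over $\Theta$ (free multi-sorted Halmos algebra generated by equalities in $W(X)$), with valuation $Val^X_H$ into subsets of $\mathrm{Hom}(W(X),H)$, and $LKer(\mu)=\{u\in\Phi(X):\mu\in Val^X_H(u)\}$. For $\mu:W(X)\to H$ with $a_i=\mu(x_i)$, $Tp^H(\mu)$ is the set of first-order formulas $u(x_1,\dots,x_n;y_1,\dots,y_m)$ over $X^0$ with free variables in $X$ and bound variables in $X^0\setminus X$ such that $u(a_1,\dots,a_n;y_1,\dots,y_m)$ holds in $H$; it is known that $Tp^{H_1}(\mu)=Tp^{H_2}(\nu)$ iff $LKer(\mu)=LKer(\nu)$. Algebras $H_1,H_2\in\Theta$ are isotypic if for every $X\in\Gamma^0$, $\{LKer(\mu)\mid\mu:W(X)\to H_1\}=\{LKer(\nu)\mid\nu:W(X)\to H_2\}$. An algebra $H\in\Theta$ is logically homogeneous if for all points $\mu,\nu:W(X)\to H$, $Tp^H(\mu)=Tp^H(\nu)$ holds iff $\nu=\sigma\mu$ for some automorphism $\sigma$ of $H$. $H$ is logically separable if every $H'\in\Theta$ isotypic to $H$ is isomorphic to $H$. $\Theta$ is logically perfect if every $W(X)$, $X\in\Gamma^0$, is logically homogeneous, and logically regular if every $W(X)$, $X\in\Gamma^0$, is logically separable.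 *)

theory Defs
  imports Main
begin

text \<open>Variables: type 'v, playing the role of the infinite variable set X0.
  The variety Theta is given by a set E of identities (pairs of terms).\<close>

datatype ('f, 'v) trm = Var 'v | Fn 'f "('f, 'v) trm list"

fun vars :: "('f, 'v) trm \<Rightarrow> 'v set" where
  "vars (Var x) = {x}"
| "vars (Fn f ts) = (\<Union>t\<in>set ts. vars t)"

fun wfT :: "('f \<Rightarrow> nat) \<Rightarrow> ('f, 'v) trm \<Rightarrow> bool" where
  "wfT ar (Var x) = True"
| "wfT ar (Fn f ts) = (length ts = ar f \<and> (\<forall>t\<in>set ts. wfT ar t))"

fun eval :: "('f \<Rightarrow> 'a list \<Rightarrow> 'a) \<Rightarrow> ('v \<Rightarrow> 'a) \<Rightarrow> ('f, 'v) trm \<Rightarrow> 'a" where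
  "eval F \<rho> (Var x) = \<rho> x"
| "eval F \<rho> (Fn f ts) = F f (map (eval F \<rho>) ts)"

fun subst :: "('v \<Rightarrow> ('f, 'w) trm) \<Rightarrow> ('f, 'v) trm \<Rightarrow> ('f, 'w) trm" where
  "subst \<sigma> (Var x) = \<sigma> x"
| "subst \<sigma> (Fn f ts) = Fn f (map (subst \<sigma>) ts)"

type_synonym ('f, 'a) alg = "'a set \<times> ('f \<Rightarrow> 'a list \<Rightarrow> 'a)"

definition closed_alg :: "('f \<Rightarrow> nat) \<Rightarrow> ('f, 'a) alg \<Rightarrow> bool" where
  "closed_alg ar A \<longleftrightarrow>
     (\<forall>f as. length as = ar f \<and> set as \<subseteq> fst A \<longrightarrow> snd A f as \<in> fst A)"

definition in_var :: "('f \<Rightarrow> nat) \<Rightarrow> (('f, 'v) trm \<times> ('f, 'v) trm) set \<Rightarrow> ('f, 'a) alg \<Rightarrow> bool" where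
  "in_var ar E A \<longleftrightarrow> closed_alg ar A \<and>
     (\<forall>(s, t)\<in>E. \<forall>\<rho>. (\<forall>x. \<rho> x \<in> fst A) \<longrightarrow> eval (snd A) \<rho> s = eval (snd A) \<rho> t)"

definition hom :: "('f \<Rightarrow> nat) \<Rightarrow> ('f, 'a) alg \<Rightarrow> ('f, 'b) alg \<Rightarrow> ('a \<Rightarrow> 'b) \<Rightarrow> bool" where
  "hom ar A B h \<longleftrightarrow> (\<forall>a\<in>fst A. h a \<in> fst B) \<and>
     (\<forall>f as. length as = ar f \<and> set as \<subseteq> fst A \<longrightarrow> h (snd A f as) = snd B f (map h as))"

definition iso_alg :: "('f \<Rightarrow> nat) \<Rightarrow> ('f, 'a) alg \<Rightarrow> ('f, 'b) alg \<Rightarrow> bool" where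
  "iso_alg ar A B \<longleftrightarrow> (\<exists>h. hom ar A B h \<and> bij_betw h (fst A) (fst B))"

definition aut :: "('f \<Rightarrow> nat) \<Rightarrow> ('f, 'a) alg \<Rightarrow> ('a \<Rightarrow> 'a) \<Rightarrow> bool" where
  "aut ar A \<sigma> \<longleftrightarrow> hom ar A A \<sigma> \<and> bij_betw \<sigma> (fst A) (fst A)"

inductive eqv :: "('f \<Rightarrow> nat) \<Rightarrow> (('f, 'v) trm \<times> ('f, 'v) trm) set \<Rightarrow> ('f, 'v) trm \<Rightarrow> ('f, 'v) trm \<Rightarrow> bool"
  for ar E where
  eqv_refl: "wfT ar t \<Longrightarrow> eqv ar E t t"
| eqv_sym: "eqv ar E s t \<Longrightarrow> eqv ar E t s"
| eqv_trans: "eqv ar E s t \<Longrightarrow> eqv ar E t u \<Longrightarrow> eqv ar E s u"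
| eqv_cong: "length ts = ar f \<Longrightarrow> list_all2 (eqv ar E) ts us \<Longrightarrow> eqv ar E (Fn f ts) (Fn f us)"
| eqv_ax: "(s, t) \<in> E \<Longrightarrow> (\<forall>x. wfT ar (\<sigma> x)) \<Longrightarrow> eqv ar E (subst \<sigma> s) (subst \<sigma> t)"

text \<open>The free algebra W(X) of Theta over X: classes of well-formed terms over X.\<close>
definition wcls :: "('f \<Rightarrow> nat) \<Rightarrow> (('f, 'v) trm \<times> ('f, 'v) trm) set \<Rightarrow> 'v set \<Rightarrow> ('f, 'v) trm \<Rightarrow> ('f, 'v) trm set" where
  "wcls ar E X t = {s. wfT ar s \<and> vars s \<subseteq> X \<and> eqv ar E s t}"

definition Wfree :: "('f \<Rightarrow> nat) \<Rightarrow> (('f, 'v) trm \<times> ('f, 'v) trm) set \<Rightarrow> 'v set \<Rightarrow> ('f, ('f, 'v) trm set) alg" where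
  "Wfree ar E X =
     ({wcls ar E X t | t. wfT ar t \<and> vars t \<subseteq> X},
      \<lambda>f cs. wcls ar E X (Fn f (map (\<lambda>c. SOME t. t \<in> c) cs)))"

datatype ('f, 'v) fm = Eq "('f, 'v) trm" "('f, 'v) trm" | Neg "('f, 'v) fm"
  | Conj "('f, 'v) fm" "('f, 'v) fm" | Ex 'v "('f, 'v) fm"

fun wfF :: "('f \<Rightarrow> nat) \<Rightarrow> ('f, 'v) fm \<Rightarrow> bool" where
  "wfF ar (Eq s t) = (wfT ar s \<and> wfT ar t)"
| "wfF ar (Neg \<phi>) = wfF ar \<phi>"
| "wfF ar (Conj \<phi> \<psi>) = (wfF ar \<phi> \<and> wfF ar \<psi>)"
| "wfF ar (Ex x \<phi>) = wfF ar \<phi>"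

fun fv :: "('f, 'v) fm \<Rightarrow> 'v set" where
  "fv (Eq s t) = vars s \<union> vars t"
| "fv (Neg \<phi>) = fv \<phi>"
| "fv (Conj \<phi> \<psi>) = fv \<phi> \<union> fv \<psi>"
| "fv (Ex x \<phi>) = fv \<phi> - {x}"

fun bv :: "('f, 'v) fm \<Rightarrow> 'v set" where
  "bv (Eq s t) = {}"
| "bv (Neg \<phi>) = bv \<phi>"
| "bv (Conj \<phi> \<psi>) = bv \<phi> \<union> bv \<psi>"
| "bv (Ex x \<phi>) = insert x (bv \<phi>)"

fun sat :: "('f, 'a) alg \<Rightarrow> ('v \<Rightarrow> 'a) \<Rightarrow> ('f, 'v) fm \<Rightarrow> bool" where
  "sat A \<rho> (Eq s t) = (eval (snd A) \<rho> s = eval (snd A) \<rho> t)"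
| "sat A \<rho> (Neg \<phi>) = (\<not> sat A \<rho> \<phi>)"
| "sat A \<rho> (Conj \<phi> \<psi>) = (sat A \<rho> \<phi> \<and> sat A \<rho> \<psi>)"
| "sat A \<rho> (Ex x \<phi>) = (\<exists>a\<in>fst A. sat A (\<rho>(x := a)) \<phi>)"

definition point :: "('f \<Rightarrow> nat) \<Rightarrow> (('f, 'v) trm \<times> ('f, 'v) trm) set \<Rightarrow> 'v set \<Rightarrow> ('f, 'a) alg \<Rightarrow> (('f, 'v) trm set \<Rightarrow> 'a) \<Rightarrow> bool" where
  "point ar E X H \<mu> \<longleftrightarrow> hom ar (Wfree ar E X) H \<mu>"

definition ptval :: "('f \<Rightarrow> nat) \<Rightarrow> (('f, 'v) trm \<times> ('f, 'v) trm) set \<Rightarrow> 'v set \<Rightarrow> (('f, 'v) trm set \<Rightarrow> 'a) \<Rightarrow> 'v \<Rightarrow> 'a" where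
  "ptval ar E X \<mu> = (\<lambda>x. \<mu> (wcls ar E X (Var x)))"

definition Tp :: "('f \<Rightarrow> nat) \<Rightarrow> (('f, 'v) trm \<times> ('f, 'v) trm) set \<Rightarrow> 'v set \<Rightarrow> ('f, 'a) alg \<Rightarrow> (('f, 'v) trm set \<Rightarrow> 'a) \<Rightarrow> ('f, 'v) fm set" where
  "Tp ar E X H \<mu> = {u. wfF ar u \<and> fv u \<subseteq> X \<and> bv u \<inter> X = {} \<and> sat H (ptval ar E X \<mu>) u}"

definition LKer :: "('f \<Rightarrow> nat) \<Rightarrow> (('f, 'v) trm \<times> ('f, 'v) trm) set \<Rightarrow> 'v set \<Rightarrow> ('f, 'a) alg \<Rightarrow> (('f, 'v) trm set \<Rightarrow> 'a) \<Rightarrow> ('f, 'v) fm set" where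
  "LKer ar E X H \<mu> = {u. wfF ar u \<and> fv u \<subseteq> X \<and> sat H (ptval ar E X \<mu>) u}"

definition log_homog :: "('f \<Rightarrow> nat) \<Rightarrow> (('f, 'v) trm \<times> ('f, 'v) trm) set \<Rightarrow> ('f, 'a) alg \<Rightarrow> bool" where
  "log_homog ar E H \<longleftrightarrow>
     (\<forall>X::'v set. finite X \<longrightarrow> (\<forall>\<mu> \<nu>. point ar E X H \<mu> \<longrightarrow> point ar E X H \<nu> \<longrightarrow>
        (Tp ar E X H \<mu> = Tp ar E X H \<nu> \<longleftrightarrow>
         (\<exists>\<sigma>. aut ar H \<sigma> \<and> (\<forall>w\<in>fst (Wfree ar E X). \<nu> w = \<sigma> (\<mu> w))))))"

definition isotypic :: "('f \<Rightarrow> nat) \<Rightarrow> (('f, 'v) trm \<times> ('f, 'v) trm) set \<Rightarrow> ('f, 'a) alg \<Rightarrow> ('f, 'b) alg \<Rightarrow> bool" where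
  "isotypic ar E H1 H2 \<longleftrightarrow>
     (\<forall>X::'v set. finite X \<longrightarrow>
        {LKer ar E X H1 \<mu> | \<mu>. point ar E X H1 \<mu>} = {LKer ar E X H2 \<nu> | \<nu>. point ar E X H2 \<nu>})"

text \<open>Logical separability, with the competing algebras H' ranging over the (arbitrary) type 'b.\<close>
definition log_sep :: "('f \<Rightarrow> nat) \<Rightarrow> (('f, 'v) trm \<times> ('f, 'v) trm) set \<Rightarrow> ('f, 'a) alg \<Rightarrow> 'b itself \<Rightarrow> bool" where
  "log_sep ar E H _ \<longleftrightarrow>
     (\<forall>H' :: ('f, 'b) alg. in_var ar E H' \<and> isotypic ar E H H' \<longrightarrow> iso_alg ar H H')"

definition log_perfect :: "('f \<Rightarrow> nat) \<Rightarrow> (('f, 'v) trm \<times> ('f, 'v) trm) set \<Rightarrow> bool" where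
  "log_perfect ar E \<longleftrightarrow> (\<forall>X::'v set. finite X \<longrightarrow> log_homog ar E (Wfree ar E X))"

definition log_regular :: "('f \<Rightarrow> nat) \<Rightarrow> (('f, 'v) trm \<times> ('f, 'v) trm) set \<Rightarrow> 'b itself \<Rightarrow> bool" where
  "log_regular ar E T \<longleftrightarrow> (\<forall>X::'v set. finite X \<longrightarrow> log_sep ar E (Wfree ar E X) T)"

end

theory Submission
  imports Defs
begin

text \<open>Let \<open>H'\<close> be isotypic to \<open>W = W(X)\<close>. The logical kernel of the identity point of \<open>W\<close> is
  realized by some point \<open>\<nu> : W \<rightarrow> H'\<close>; since the kernel contains exactly the equalities valid
  in \<open>W\<close>, \<open>\<nu>\<close> is injective. For surjectivity, take \<open>b \<in> H'\<close> and a fresh variable \<open>y\<close>, extend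
  \<open>\<nu>\<close> by \<open>y \<mapsto> b\<close>, and realize the kernel of this point back in \<open>W\<close> by \<open>\<mu>'\<close>. On \<open>X\<close> the point
  \<open>\<mu>'\<close> has the same type as the identity, so by logical homogeneity it is an automorphism
  there; hence \<open>\<mu>'(y) = \<mu>'(t)\<close> for a term \<open>t\<close> over \<open>X\<close>. The formula \<open>y = t\<close> then transfers
  back to \<open>H'\<close> and shows \<open>b = \<nu>(t)\<close>.\<close>

lemma eval_cong: "(\<forall>x\<in>vars t. \<rho> x = \<rho>' x) \<Longrightarrow> eval F \<rho> t = eval F \<rho>' t"
  by (induction t) (auto intro!: map_cong arg_cong[where f="F _"])

lemma sat_cong: "(\<forall>x\<in>fv u. \<rho> x = \<rho>' x) \<Longrightarrow> sat A \<rho> u = sat A \<rho>' u"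
proof (induction u arbitrary: \<rho> \<rho>')
  case (Eq s t)
  then show ?case using eval_cong[of s \<rho> \<rho>'] eval_cong[of t \<rho> \<rho>'] by auto
next
  case (Conj u1 u2)
  then show ?case by (metis UnCI fv.simps(3) sat.simps(3))
next
  case (Ex x \<phi>)
  have "\<And>a. sat A (\<rho>(x := a)) \<phi> = sat A (\<rho>'(x := a)) \<phi>"
    using Ex.prems by (intro Ex.IH) auto
  then show ?case by simp
qed auto

lemma eval_closed:
  "closed_alg ar A \<Longrightarrow> wfT ar t \<Longrightarrow> \<forall>x\<in>vars t. \<rho> x \<in> fst A \<Longrightarrow> eval (snd A) \<rho> t \<in> fst A"
proof (induction t)
  case (Fn f ts)
  have "set (map (eval (snd A) \<rho>) ts) \<subseteq> fst A" using Fn by auto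
  then show ?case using Fn.prems(1,2) unfolding closed_alg_def by simp
qed auto

lemma eval_subst: "eval F \<rho> (subst \<sigma> t) = eval F (\<lambda>x. eval F \<rho> (\<sigma> x)) t"
  by (induction t) (auto intro!: arg_cong[where f="F _"])

lemma eqv_sound:
  assumes "in_var ar E A" "\<forall>x. \<rho> x \<in> fst A" "eqv ar E s t"
  shows "eval (snd A) \<rho> s = eval (snd A) \<rho> t"
  using assms(3)
proof (induction rule: eqv.induct)
  case (eqv_cong ts f us)
  have "map (eval (snd A) \<rho>) ts = map (eval (snd A) \<rho>) us"
    using eqv_cong(2) by (induction rule: list_all2_induct) auto
  then show ?case by simp
next
  case (eqv_ax s t \<sigma>)
  have "\<forall>x. eval (snd A) \<rho> (\<sigma> x) \<in> fst A"
    using eval_closed assms(1,2) eqv_ax(2) unfolding in_var_def by blast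
  then show ?case
    unfolding eval_subst using assms(1) eqv_ax(1) unfolding in_var_def by auto
qed auto

lemma wcls_eq_if_eqv: "eqv ar E s t \<Longrightarrow> wcls ar E X s = wcls ar E X t"
  unfolding wcls_def by (auto intro: eqv_trans eqv_sym)

lemma mem_wcls_self: "wfT ar t \<Longrightarrow> vars t \<subseteq> X \<Longrightarrow> t \<in> wcls ar E X t"
  unfolding wcls_def by (auto intro: eqv_refl)

lemma some_mem_wcls: "wfT ar t \<Longrightarrow> vars t \<subseteq> X \<Longrightarrow> (SOME r. r \<in> wcls ar E X t) \<in> wcls ar E X t"
  by (rule someI) (rule mem_wcls_self)

lemma Wfree_carrier_iff:
  "c \<in> fst (Wfree ar E X) \<longleftrightarrow> (\<exists>t. c = wcls ar E X t \<and> wfT ar t \<and> vars t \<subseteq> X)"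
  unfolding Wfree_def by auto

lemma wcls_Var_in_Wfree: "x \<in> X \<Longrightarrow> wcls ar E X (Var x) \<in> fst (Wfree ar E X)"
  unfolding Wfree_carrier_iff by (intro exI[of _ "Var x"]) auto

lemma Wfree_some_rep:
  assumes "c \<in> fst (Wfree ar E X)"
  shows "(SOME r. r \<in> c) \<in> c \<and> wfT ar (SOME r. r \<in> c) \<and> vars (SOME r. r \<in> c) \<subseteq> X
    \<and> wcls ar E X (SOME r. r \<in> c) = c"
proof -
  obtain t where t: "c = wcls ar E X t" "wfT ar t" "vars t \<subseteq> X"
    using assms unfolding Wfree_carrier_iff by blast
  have "(SOME r. r \<in> c) \<in> c" using some_mem_wcls[OF t(2,3)] t(1) by simp
  then show ?thesis using t(1) wcls_eq_if_eqv[of ar E _ t X] unfolding wcls_def by auto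
qed

lemma Wfree_op_wcls:
  assumes "length ts = ar f" "\<forall>t\<in>set ts. wfT ar t \<and> vars t \<subseteq> X"
  shows "snd (Wfree ar E X) f (map (wcls ar E X) ts) = wcls ar E X (Fn f ts)"
proof -
  have "list_all2 (eqv ar E) (map (\<lambda>c. SOME t. t \<in> c) (map (wcls ar E X) ts)) ts"
    unfolding list.rel_map
  proof (rule list.rel_refl_strong)
    fix z assume "z \<in> set ts"
    then have "(SOME r. r \<in> wcls ar E X z) \<in> wcls ar E X z" using some_mem_wcls assms(2) by blast
    then show "eqv ar E (SOME t. t \<in> wcls ar E X z) z" unfolding wcls_def by blast
  qed
  then have "eqv ar E (Fn f (map (\<lambda>c. SOME t. t \<in> c) (map (wcls ar E X) ts))) (Fn f ts)"
    using assms(1) by (intro eqv_cong) auto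
  then show ?thesis unfolding Wfree_def by (simp add: wcls_eq_if_eqv)
qed

lemma point_eval_wcls:
  assumes "point ar E X A \<mu>"
  shows "wfT ar t \<Longrightarrow> vars t \<subseteq> X \<Longrightarrow> \<mu> (wcls ar E X t) = eval (snd A) (ptval ar E X \<mu>) t"
proof (induction t)
  case (Var x)
  then show ?case by (simp add: ptval_def)
next
  case (Fn f ts)
  have ts: "\<forall>t\<in>set ts. wfT ar t \<and> vars t \<subseteq> X" "length ts = ar f" using Fn.prems by auto
  have cs: "set (map (wcls ar E X) ts) \<subseteq> fst (Wfree ar E X)"
    using ts by (force simp: Wfree_carrier_iff)
  have "\<mu> (wcls ar E X (Fn f ts)) = \<mu> (snd (Wfree ar E X) f (map (wcls ar E X) ts))"
    using Wfree_op_wcls[OF ts(2,1)] by simp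
  also have "\<dots> = snd A f (map \<mu> (map (wcls ar E X) ts))"
    using assms cs ts(2) unfolding point_def hom_def by simp
  also have "map \<mu> (map (wcls ar E X) ts) = map (eval (snd A) (ptval ar E X \<mu>)) ts"
    using Fn.IH ts(1) by auto
  finally show ?case by simp
qed

lemma closed_alg_Wfree: "closed_alg ar (Wfree ar E X)"
  unfolding closed_alg_def
proof (intro allI impI)
  fix f as assume as: "length as = ar f \<and> set as \<subseteq> fst (Wfree ar E X)"
  let ?t = "Fn f (map (\<lambda>c. SOME t. t \<in> c) as)"
  have "wfT ar ?t" "vars ?t \<subseteq> X"
    using as Wfree_some_rep[of _ ar E X] by auto
  moreover have "snd (Wfree ar E X) f as = wcls ar E X ?t"
    by (simp add: Wfree_def)
  ultimately show "snd (Wfree ar E X) f as \<in> fst (Wfree ar E X)"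
    unfolding Wfree_carrier_iff by blast
qed

lemma eval_Wfree:
  assumes "\<forall>x. \<rho> x \<in> fst (Wfree ar E X)"
  shows "wfT ar t \<Longrightarrow> eval (snd (Wfree ar E X)) \<rho> t = wcls ar E X (subst (\<lambda>x. SOME s. s \<in> \<rho> x) t)
     \<and> wfT ar (subst (\<lambda>x. SOME s. s \<in> \<rho> x) t) \<and> vars (subst (\<lambda>x. SOME s. s \<in> \<rho> x) t) \<subseteq> X"
proof (induction t)
  case (Var x)
  then show ?case using Wfree_some_rep[of "\<rho> x" ar E X] assms by simp
next
  case (Fn f ts)
  let ?r = "\<lambda>x. SOME s. s \<in> \<rho> x"
  have IH: "\<forall>t\<in>set ts. eval (snd (Wfree ar E X)) \<rho> t = wcls ar E X (subst ?r t)
      \<and> wfT ar (subst ?r t) \<and> vars (subst ?r t) \<subseteq> X"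
    using Fn by auto
  have "map (eval (snd (Wfree ar E X)) \<rho>) ts = map (wcls ar E X) (map (subst ?r) ts)"
    unfolding map_map by (rule map_cong) (use IH in auto)
  then have "eval (snd (Wfree ar E X)) \<rho> (Fn f ts)
      = snd (Wfree ar E X) f (map (wcls ar E X) (map (subst ?r) ts))"
    by (simp only: eval.simps)
  also have "\<dots> = wcls ar E X (Fn f (map (subst ?r) ts))"
    using Fn.prems IH by (intro Wfree_op_wcls) auto
  finally show ?case using IH Fn.prems by auto
qed

lemma in_var_Wfree:
  fixes E :: "(('f, 'v) trm \<times> ('f, 'v) trm) set"
  assumes "\<forall>(s, t)\<in>E. wfT ar s \<and> wfT ar t"
  shows "in_var ar E (Wfree ar E X)"
  unfolding in_var_def
proof (intro conjI closed_alg_Wfree ballI allI impI, clarify)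
  fix s t and \<rho> :: "'v \<Rightarrow> ('f, 'v) trm set"
  assume st: "(s, t) \<in> E" and \<rho>: "\<forall>x. \<rho> x \<in> fst (Wfree ar E X)"
  let ?r = "\<lambda>x. SOME s. s \<in> \<rho> x"
  have "\<forall>x. wfT ar (?r x)" using Wfree_some_rep \<rho> by blast
  then have "eqv ar E (subst ?r s) (subst ?r t)" using st by (intro eqv_ax)
  then show "eval (snd (Wfree ar E X)) \<rho> s = eval (snd (Wfree ar E X)) \<rho> t"
    using eval_Wfree[OF \<rho>] assms st by (auto simp: wcls_eq_if_eqv)
qed

lemma point_id: "point ar E X (Wfree ar E X) id"
  unfolding point_def hom_def by simp

lemma ptval_in_carrier: "point ar E X A \<mu> \<Longrightarrow> x \<in> X \<Longrightarrow> ptval ar E X \<mu> x \<in> fst A"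
  using wcls_Var_in_Wfree[of x X ar E] unfolding point_def ptval_def hom_def by blast

lemma eval_ptval_id:
  assumes "wfT ar t" "vars t \<subseteq> X"
  shows "eval (snd (Wfree ar E X)) (ptval ar E X id) t = wcls ar E X t"
  using point_eval_wcls[OF point_id assms] by simp

lemma point_on_empty_carrier:
  assumes "closed_alg ar A" "fst A = {}"
  shows "point ar E {} A (\<lambda>_. undefined)"
proof -
  have W: "fst (Wfree ar E {}) = {}"
  proof (rule ccontr)
    assume "fst (Wfree ar E {}) \<noteq> {}"
    then obtain c where "c \<in> fst (Wfree ar E {})" by blast
    then obtain t where "c = wcls ar E {} t" "wfT ar t" "vars t \<subseteq> {}"
      unfolding Wfree_carrier_iff by blast
    then have "eval (snd A) (\<lambda>_. undefined) t \<in> fst A" using eval_closed[OF assms(1)] by auto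
    then show False using assms(2) by simp
  qed
  show ?thesis
    unfolding point_def hom_def W
  proof (intro conjI allI impI ballI)
    fix f as assume "length as = ar f \<and> set as \<subseteq> {}"
    then have "snd A f [] \<in> fst A" using assms(1) unfolding closed_alg_def by auto
    then show "undefined = snd A f (map (\<lambda>_. undefined) as)" using assms(2) by simp
  qed auto
qed

lemma point_extends:
  assumes "in_var ar E A" "\<forall>x\<in>X. \<rho> x \<in> fst A"
  shows "\<exists>\<mu>. point ar E X A \<mu> \<and> (\<forall>x\<in>X. ptval ar E X \<mu> x = \<rho> x)"
proof (cases "fst A = {}")
  case True
  then have "X = {}" using assms(2) by auto
  then show ?thesis
    using point_on_empty_carrier[OF _ True] assms(1) unfolding in_var_def by auto
next
  case False
  define \<rho>' where "\<rho>' = (\<lambda>x. if x \<in> X then \<rho> x else (SOME a. a \<in> fst A))"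
  have \<rho>': "\<forall>x. \<rho>' x \<in> fst A" using False assms(2) unfolding \<rho>'_def by (auto intro: someI)
  have cl: "closed_alg ar A" using assms(1) unfolding in_var_def by simp
  define \<mu> where "\<mu> = (\<lambda>c. eval (snd A) \<rho>' (SOME t. t \<in> c))"
  have \<mu>_wcls: "\<mu> (wcls ar E X t) = eval (snd A) \<rho>' t" if "wfT ar t" "vars t \<subseteq> X" for t
  proof -
    have "eqv ar E (SOME r. r \<in> wcls ar E X t) t"
      using some_mem_wcls[OF that] unfolding wcls_def by simp
    then show ?thesis unfolding \<mu>_def using eqv_sound[OF assms(1) \<rho>'] by simp
  qed
  have "point ar E X A \<mu>"
    unfolding point_def hom_def
  proof (intro conjI allI impI ballI)
    fix c assume "c \<in> fst (Wfree ar E X)"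
    then obtain t where t: "c = wcls ar E X t" "wfT ar t" "vars t \<subseteq> X"
      unfolding Wfree_carrier_iff by blast
    show "\<mu> c \<in> fst A" using t \<mu>_wcls eval_closed[OF cl t(2)] \<rho>' by simp
  next
    fix f as assume as: "length as = ar f \<and> set as \<subseteq> fst (Wfree ar E X)"
    define ts where "ts = map (\<lambda>c. SOME t. t \<in> c) as"
    have ts: "\<forall>t\<in>set ts. wfT ar t \<and> vars t \<subseteq> X" "length ts = ar f"
      using as Wfree_some_rep[of _ ar E X] unfolding ts_def by auto
    have "map (wcls ar E X \<circ> (\<lambda>c. SOME t. t \<in> c)) as = as"
      by (rule map_idI) (use as Wfree_some_rep[of _ ar E X] in auto)
    then have as_ts: "as = map (wcls ar E X) ts"
      unfolding ts_def by simp
    have "\<mu> (snd (Wfree ar E X) f as) = eval (snd A) \<rho>' (Fn f ts)"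
      using Wfree_op_wcls[OF ts(2,1)] as_ts \<mu>_wcls[of "Fn f ts"] ts by auto
    also have "\<dots> = snd A f (map \<mu> as)"
    proof -
      have "map (eval (snd A) \<rho>') ts = map (\<mu> \<circ> wcls ar E X) ts"
        by (rule map_cong) (use \<mu>_wcls ts in auto)
      then show ?thesis using as_ts by (simp only: eval.simps map_map)
    qed
    finally show "\<mu> (snd (Wfree ar E X) f as) = snd A f (map \<mu> as)" .
  qed
  moreover have "\<forall>x\<in>X. ptval ar E X \<mu> x = \<rho> x"
    unfolding ptval_def using \<mu>_wcls[of "Var _"] by (auto simp: \<rho>'_def)
  ultimately show ?thesis by blast
qed

lemma LKer_restrict:
  assumes "X \<subseteq> X'" "\<forall>x\<in>X. ptval ar E X \<mu> x = ptval ar E X' \<mu>' x"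
  shows "LKer ar E X H \<mu> = {u \<in> LKer ar E X' H \<mu>'. fv u \<subseteq> X}"
proof -
  have "sat H (ptval ar E X \<mu>) u = sat H (ptval ar E X' \<mu>') u" if "fv u \<subseteq> X" for u
    using assms(2) that by (intro sat_cong) auto
  then show ?thesis using assms(1) unfolding LKer_def by auto
qed

lemma Tp_eq_LKer_Int: "Tp ar E X H \<mu> = {u \<in> LKer ar E X H \<mu>. bv u \<inter> X = {}}"
  unfolding Tp_def LKer_def by auto

lemma isotypic_sym: "isotypic ar E H1 H2 \<Longrightarrow> isotypic ar E H2 H1"
  unfolding isotypic_def by simp

lemma isotypic_realizes_LKer:
  assumes "isotypic ar E H1 H2" "finite X" "point ar E X H1 \<mu>"
  shows "\<exists>\<nu>. point ar E X H2 \<nu> \<and> LKer ar E X H2 \<nu> = LKer ar E X H1 \<mu>"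
proof -
  have "LKer ar E X H1 \<mu> \<in> {LKer ar E X H1 \<mu> | \<mu>. point ar E X H1 \<mu>}" using assms(3) by blast
  then have "LKer ar E X H1 \<mu> \<in> {LKer ar E X H2 \<nu> | \<nu>. point ar E X H2 \<nu>}"
    using assms(1,2) unfolding isotypic_def by simp
  then show ?thesis by auto
qed

text \<open>The equalities in the kernel of the identity point are exactly those holding in \<open>W(X)\<close>.\<close>

lemma inj_on_if_LKer_eq_id:
  assumes \<nu>: "point ar E X H \<nu>" and ker: "LKer ar E X H \<nu> = LKer ar E X (Wfree ar E X) id"
  shows "inj_on \<nu> (fst (Wfree ar E X))"
proof (rule inj_onI)
  fix c1 c2 assume c: "c1 \<in> fst (Wfree ar E X)" "c2 \<in> fst (Wfree ar E X)" "\<nu> c1 = \<nu> c2"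
  obtain t1 where t1: "c1 = wcls ar E X t1" "wfT ar t1" "vars t1 \<subseteq> X"
    using c(1) unfolding Wfree_carrier_iff by blast
  obtain t2 where t2: "c2 = wcls ar E X t2" "wfT ar t2" "vars t2 \<subseteq> X"
    using c(2) unfolding Wfree_carrier_iff by blast
  have "Eq t1 t2 \<in> LKer ar E X H \<nu>"
    unfolding LKer_def using t1 t2 c(3) point_eval_wcls[OF \<nu>] by auto
  then have "Eq t1 t2 \<in> LKer ar E X (Wfree ar E X) id" using ker by simp
  then show "c1 = c2"
    unfolding LKer_def using t1 t2 eval_ptval_id[of ar t1 X E] eval_ptval_id[of ar t2 X E] by simp
qed

lemma surj_if_LKer_eq_id:
  assumes "log_homog ar E (Wfree ar E X)" "finite X" "point ar E X (Wfree ar E X) \<mu>"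
    and ker: "LKer ar E X (Wfree ar E X) \<mu> = LKer ar E X (Wfree ar E X) id"
  shows "fst (Wfree ar E X) \<subseteq> \<mu> ` fst (Wfree ar E X)"
proof -
  have "Tp ar E X (Wfree ar E X) id = Tp ar E X (Wfree ar E X) \<mu>"
    unfolding Tp_eq_LKer_Int ker ..
  then obtain \<sigma> where \<sigma>: "aut ar (Wfree ar E X) \<sigma>" "\<forall>w\<in>fst (Wfree ar E X). \<mu> w = \<sigma> (id w)"
    using assms(1-3) point_id[of ar E X] unfolding log_homog_def by metis
  then show ?thesis unfolding aut_def bij_betw_def by auto
qed

lemma defining_eq_in_LKer:
  assumes \<mu>': "point ar E X' (Wfree ar E X) \<mu>'" and "X \<subseteq> X'" "y \<in> X'"
    and \<mu>: "point ar E X (Wfree ar E X) \<mu>" "\<forall>x\<in>X. ptval ar E X \<mu> x = ptval ar E X' \<mu>' x"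
    and onto: "fst (Wfree ar E X) \<subseteq> \<mu> ` fst (Wfree ar E X)"
  shows "\<exists>t. wfT ar t \<and> vars t \<subseteq> X \<and> Eq (Var y) t \<in> LKer ar E X' (Wfree ar E X) \<mu>'"
proof -
  have "ptval ar E X' \<mu>' y \<in> fst (Wfree ar E X)" using ptval_in_carrier[OF \<mu>' assms(3)] .
  then obtain c where c: "c \<in> fst (Wfree ar E X)" "ptval ar E X' \<mu>' y = \<mu> c"
    using onto by blast
  then obtain t where t: "wfT ar t" "vars t \<subseteq> X" "ptval ar E X' \<mu>' y = \<mu> (wcls ar E X t)"
    unfolding Wfree_carrier_iff by blast
  have "\<mu> (wcls ar E X t) = eval (snd (Wfree ar E X)) (ptval ar E X \<mu>) t"
    using point_eval_wcls[OF \<mu>(1) t(1,2)] .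
  also have "\<dots> = eval (snd (Wfree ar E X)) (ptval ar E X' \<mu>') t"
    using \<mu>(2) t(2) by (intro eval_cong) auto
  finally have "ptval ar E X' \<mu>' y = eval (snd (Wfree ar E X)) (ptval ar E X' \<mu>') t"
    using t(3) by simp
  then show ?thesis
    using t assms(2,3) unfolding LKer_def by (intro exI[of _ t]) auto
qed

lemma surj_if_isotypic_Wfree:
  assumes "infinite (UNIV :: 'v set)" "\<forall>(s, t)\<in>E. wfT ar s \<and> wfT ar t"
    and homog: "log_homog ar E (Wfree ar E X)" and fin: "finite (X :: 'v set)"
    and H': "in_var ar E H'" and iso: "isotypic ar E (Wfree ar E X) H'"
    and \<nu>: "point ar E X H' \<nu>" and ker: "LKer ar E X H' \<nu> = LKer ar E X (Wfree ar E X) id"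
  shows "fst H' \<subseteq> \<nu> ` fst (Wfree ar E X)"
proof
  fix b assume b: "b \<in> fst H'"
  let ?W = "Wfree ar E X"
  obtain y where y: "y \<notin> X" using ex_new_if_finite[OF assms(1) fin] by blast
  define X' where "X' = insert y X"
  have XX': "X \<subseteq> X'" "y \<in> X'" "finite X'" using fin unfolding X'_def by auto
  have "\<forall>x\<in>X'. ((ptval ar E X \<nu>)(y := b)) x \<in> fst H'"
    using b ptval_in_carrier[OF \<nu>] unfolding X'_def by auto
  from point_extends[OF H' this] obtain \<nu>'
    where \<nu>': "point ar E X' H' \<nu>'" "\<forall>x\<in>X'. ptval ar E X' \<nu>' x = ((ptval ar E X \<nu>)(y := b)) x"
    by blast
  obtain \<mu>' where \<mu>': "point ar E X' ?W \<mu>'" "LKer ar E X' ?W \<mu>' = LKer ar E X' H' \<nu>'"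
    using isotypic_realizes_LKer[OF isotypic_sym[OF iso] XX'(3) \<nu>'(1)] by blast
  have "\<forall>x\<in>X. ptval ar E X' \<mu>' x \<in> fst ?W" using ptval_in_carrier[OF \<mu>'(1)] XX'(1) by blast
  from point_extends[OF in_var_Wfree[OF assms(2)] this] obtain \<mu>
    where \<mu>: "point ar E X ?W \<mu>" "\<forall>x\<in>X. ptval ar E X \<mu> x = ptval ar E X' \<mu>' x"
    by blast
  have \<nu>\<nu>': "\<forall>x\<in>X. ptval ar E X \<nu> x = ptval ar E X' \<nu>' x" using \<nu>'(2) y XX'(1) by auto
  have "LKer ar E X ?W \<mu> = LKer ar E X ?W id"
    using LKer_restrict[OF XX'(1) \<mu>(2)] LKer_restrict[OF XX'(1) \<nu>\<nu>'] \<mu>'(2) ker by simp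
  then have "fst ?W \<subseteq> \<mu> ` fst ?W" using surj_if_LKer_eq_id[OF homog fin \<mu>(1)] by simp
  then obtain t where t: "wfT ar t" "vars t \<subseteq> X" "Eq (Var y) t \<in> LKer ar E X' H' \<nu>'"
    using defining_eq_in_LKer[OF \<mu>'(1) XX'(1,2) \<mu>] \<mu>'(2) by auto
  have "b = eval (snd H') (ptval ar E X' \<nu>') t" using t(3) \<nu>'(2) XX'(2) unfolding LKer_def by auto
  also have "\<dots> = eval (snd H') (ptval ar E X \<nu>) t"
    using \<nu>\<nu>' t(2) by (intro eval_cong) auto
  also have "\<dots> = \<nu> (wcls ar E X t)"
    using point_eval_wcls[OF \<nu> t(1,2)] ..
  finally show "b \<in> \<nu> ` fst ?W"
    by (rule image_eqI) (use t(1,2) in \<open>auto simp: Wfree_carrier_iff\<close>)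
qed

theorem theorem3p11:
  fixes ar :: "'f \<Rightarrow> nat" and E :: "(('f, 'v) trm \<times> ('f, 'v) trm) set"
  assumes "infinite (UNIV :: 'v set)"
    and "\<forall>(s, t)\<in>E. wfT ar s \<and> wfT ar t"
    and "log_perfect ar E"
  shows "log_regular ar E TYPE('b)"
  unfolding log_regular_def log_sep_def
proof (intro allI impI, elim conjE)
  fix X :: "'v set" and H' :: "('f, 'b) alg"
  assume fin: "finite X" and H': "in_var ar E H'" and iso: "isotypic ar E (Wfree ar E X) H'"
  have homog: "log_homog ar E (Wfree ar E X)" using assms(3) fin unfolding log_perfect_def by blast
  obtain \<nu> where \<nu>: "point ar E X H' \<nu>" "LKer ar E X H' \<nu> = LKer ar E X (Wfree ar E X) id"
    using isotypic_realizes_LKer[OF iso fin point_id] by blast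
  have "inj_on \<nu> (fst (Wfree ar E X))" using inj_on_if_LKer_eq_id[OF \<nu>] .
  moreover have "fst H' \<subseteq> \<nu> ` fst (Wfree ar E X)"
    using surj_if_isotypic_Wfree[OF assms(1,2) homog fin H' iso \<nu>] .
  moreover have "\<nu> ` fst (Wfree ar E X) \<subseteq> fst H'" using \<nu>(1) unfolding point_def hom_def by auto
  ultimately show "iso_alg ar (Wfree ar E X) H'"
    using \<nu>(1) unfolding iso_alg_def point_def bij_betw_def by blast
qed

end
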